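(* Let $\alpha$ be a sequence such that $M(\alpha)$ is a bounded multiplicative Hankel operator on $\ell^2(\mathbb{N})$. For $0<r<1$ let $\alpha_r=D_r\alpha$. Then $M(\alpha_r)$ is a compact operator on $\ell^2(\mathbb{N})$, $\|M(\alpha_r)\|_{\mathcal{B}(\ell^2(\mathbb{N}))}\le\|M(\alpha)\|_{\mathcal{B}(\ell^2(\mathbb{N}))}$, and $M(\alpha_r)\to M(\alpha)$ and $M(\alpha_r)^*\to M(\alpha)^*$ in the strong operator topology as $r\to1$.
   Context: For a sequence $\alpha\colon\mathbb{N}\to\mathbb{C}$, $M(\alpha)$ is defined by $\langle M(\alpha)a,b\rangle_{\ell^2(\mathbb{N})}=\sum_{n,m}a(n)\overline{b(m)}\alpha(nm)$ for finitely supported $a,b$, and is bounded if it extends to a bounded operator on $\ell^2(\mathbb{N})$. Let $p_1<p_2<\dots$ be the primes. For a sequence $a$ and $0<r<1$, $D_ra(n)=r^{\sum_{j\ge1}j\kappa_j}a(n)$ where $n=\prod_{j\ge1}p_j^{\kappa_j}$. *)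

theory Defs
  imports "HOL-Analysis.Analysis" "HOL-Computational_Algebra.Primes"
begin

text \<open>Sequences on \<open>\<nat> = {1,2,...}\<close> are modelled as functions \<open>nat \<Rightarrow> complex\<close>
  that vanish at 0.\<close>

definition l2 :: "(nat \<Rightarrow> complex) set" where
  "l2 = {a. a 0 = 0 \<and> (\<lambda>n. (cmod (a n))\<^sup>2) summable_on UNIV}"

definition l2norm :: "(nat \<Rightarrow> complex) \<Rightarrow> real" where
  "l2norm a = sqrt (infsum (\<lambda>n. (cmod (a n))\<^sup>2) UNIV)"

definition fin_supp :: "(nat \<Rightarrow> complex) \<Rightarrow> bool" where
  "fin_supp a \<longleftrightarrow> a 0 = 0 \<and> finite {n. a n \<noteq> 0}"

definition Mform :: "(nat \<Rightarrow> complex) \<Rightarrow> (nat \<Rightarrow> complex) \<Rightarrow> (nat \<Rightarrow> complex) \<Rightarrow> complex" where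
  "Mform \<alpha> a b = (\<Sum>n\<in>{n. a n \<noteq> 0}. \<Sum>m\<in>{m. b m \<noteq> 0}. a n * cnj (b m) * \<alpha> (n * m))"

definition bounded_M :: "(nat \<Rightarrow> complex) \<Rightarrow> bool" where
  "bounded_M \<alpha> \<longleftrightarrow> (\<exists>C. \<forall>a b. fin_supp a \<longrightarrow> fin_supp b \<longrightarrow>
      cmod (Mform \<alpha> a b) \<le> C * l2norm a * l2norm b)"

definition Mop :: "(nat \<Rightarrow> complex) \<Rightarrow> (nat \<Rightarrow> complex) \<Rightarrow> nat \<Rightarrow> complex" where
  "Mop \<alpha> a m = (if m = 0 then 0 else infsum (\<lambda>n. \<alpha> (n * m) * a n) {1..})"

text \<open>Action of the adjoint \<open>M(\<alpha>)^*\<close>: \<open>(M(\<alpha>)^* a)(m) = \<Sum>_n conj(\<alpha>(nm)) a(n)\<close>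
  (the conjugate transpose of the symmetric matrix \<open>(\<alpha>(nm))\<close>).\<close>
definition Madj :: "(nat \<Rightarrow> complex) \<Rightarrow> (nat \<Rightarrow> complex) \<Rightarrow> nat \<Rightarrow> complex" where
  "Madj \<alpha> a m = (if m = 0 then 0 else infsum (\<lambda>n. cnj (\<alpha> (n * m)) * a n) {1..})"

definition Mnorm :: "(nat \<Rightarrow> complex) \<Rightarrow> real" where
  "Mnorm \<alpha> = Sup {l2norm (Mop \<alpha> a) | a. a \<in> l2 \<and> l2norm a \<le> 1}"

definition compact_M :: "(nat \<Rightarrow> complex) \<Rightarrow> bool" where
  "compact_M \<alpha> \<longleftrightarrow> (\<forall>a\<in>l2. Mop \<alpha> a \<in> l2) \<and>
     (\<forall>x :: nat \<Rightarrow> nat \<Rightarrow> complex. (\<forall>k. x k \<in> l2 \<and> l2norm (x k) \<le> 1) \<longrightarrow>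
        (\<exists>(s :: nat \<Rightarrow> nat) y. strict_mono s \<and> y \<in> l2 \<and>
           (\<lambda>k. l2norm (\<lambda>m. Mop \<alpha> (x (s k)) m - y m)) \<longlonglongrightarrow> 0))"

text \<open>Index of a prime: \<open>prime_index (p_j) = j\<close> where \<open>p_1 < p_2 < \<dots>\<close> are the primes.\<close>
definition prime_index :: "nat \<Rightarrow> nat" where
  "prime_index p = card {q. prime q \<and> q \<le> p}"

definition weight :: "nat \<Rightarrow> nat" where
  "weight n = (\<Sum>p\<in>prime_factors n. prime_index p * multiplicity p n)"

definition Dr :: "real \<Rightarrow> (nat \<Rightarrow> complex) \<Rightarrow> nat \<Rightarrow> complex" where
  "Dr r a n = complex_of_real (r ^ weight n) * a n"

end

theory Submission
  imports Defs
begin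

text \<open>Since the weight is additive, \<open>M(D\<^sub>r \<alpha>) = D\<^sub>r M(\<alpha>) D\<^sub>r\<close>, where \<open>D\<^sub>r\<close> is the diagonal
  operator with entries \<open>r\<^bsup>weight m\<^esup> \<in> [0,1]\<close>. As \<open>D\<^sub>r\<close> is a contraction, the norm does not
  increase; as \<open>D\<^sub>r \<rightarrow> 1\<close> strongly when \<open>r \<rightarrow> 1\<close>, \<open>M(D\<^sub>r \<alpha>) \<rightarrow> M(\<alpha>)\<close> strongly, and the adjoint
  follows by complex conjugation. Finally, only finitely many \<open>m\<close> have weight at most \<open>K\<close>, so
  \<open>r\<^bsup>weight m\<^esup> \<rightarrow> 0\<close> along the cofinite filter and \<open>D\<^sub>r\<close> is compact: a bounded sequence has a
  pointwise convergent subsequence, which \<open>D\<^sub>r\<close> turns into a norm convergent one.\<close>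

section \<open>The weight of an integer\<close>

lemma weight_mult:
  assumes "n > 0" "m > 0"
  shows "weight (n * m) = weight n + weight m"
proof -
  let ?U = "prime_factors n \<union> prime_factors m"
  let ?f = "\<lambda>k p. prime_index p * multiplicity p k"
  have extend: "weight k = (\<Sum>p\<in>?U. ?f k p)" if "k \<in> {n, m}" for k
    unfolding weight_def
  proof (rule sum.mono_neutral_left)
    show "\<forall>p\<in>?U - prime_factors k. ?f k p = 0"
      using that assms by (auto simp: not_dvd_imp_multiplicity_0 in_prime_factors_iff)
  qed (use that in auto)
  have "weight (n * m) = (\<Sum>p\<in>?U. ?f (n * m) p)"
    unfolding weight_def using assms by (simp add: prime_factors_product)
  also have "\<dots> = (\<Sum>p\<in>?U. ?f n p + ?f m p)"
  proof (intro sum.cong refl)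
    fix p assume "p \<in> ?U"
    then have "prime p"
      by auto
    then show "?f (n * m) p = ?f n p + ?f m p"
      using assms by (simp add: prime_elem_multiplicity_mult_distrib algebra_simps)
  qed
  also have "\<dots> = weight n + weight m"
    by (simp add: sum.distrib extend)
  finally show ?thesis .
qed

lemma finite_primes_le: "finite {q :: nat. prime q \<and> q \<le> p}"
  by (rule finite_subset[of _ "{..p}"]) auto

lemma prime_index_pos:
  assumes "prime p"
  shows "prime_index p \<ge> 1"
proof -
  have "p \<in> {q. prime q \<and> q \<le> p}"
    using assms by simp
  then have "card {q. prime q \<and> q \<le> p} > 0"
    using finite_primes_le card_gt_0_iff by blast
  then show ?thesis
    unfolding prime_index_def by simp
qed

lemma prime_index_less:
  assumes "prime p" "prime q" "p < q"
  shows "prime_index p < prime_index q"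
  unfolding prime_index_def
proof (rule psubset_card_mono[OF finite_primes_le])
  have "q \<notin> {x. prime x \<and> x \<le> p}" "q \<in> {x. prime x \<and> x \<le> q}"
    using assms by auto
  moreover have "{x. prime x \<and> x \<le> p} \<subseteq> {x. prime x \<and> x \<le> q}"
    using assms by auto
  ultimately show "{x. prime x \<and> x \<le> p} \<subset> {x. prime x \<and> x \<le> q}"
    by blast
qed

lemma inj_on_prime_index: "inj_on prime_index {p. prime p}"
proof (rule inj_onI)
  fix p q assume "p \<in> {p. prime p}" "q \<in> {p. prime p}" "prime_index p = prime_index q"
  then show "p = q"
    using prime_index_less[of p q] prime_index_less[of q p]
    by (metis linorder_neqE_nat mem_Collect_eq order_less_irrefl)
qed

text \<open>Only finitely many primes have index at most \<open>K\<close>, and their exponents are bounded by \<open>K\<close>,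
  so every \<open>n > 0\<close> of weight at most \<open>K\<close> divides a single number \<open>Q\<close>.\<close>

lemma finite_weight_le: "finite {n. weight n \<le> K}"
proof -
  define P where "P = {p. prime p \<and> prime_index p \<le> K}"
  have "finite (prime_index ` P)"
    by (rule finite_subset[of _ "{..K}"]) (auto simp: P_def)
  moreover have "inj_on prime_index P"
    using inj_on_prime_index by (rule inj_on_subset) (auto simp: P_def)
  ultimately have finP: "finite P"
    using finite_imageD by blast
  define Q where "Q = (\<Prod>p\<in>P. p ^ K)"
  have "Q > 0"
    unfolding Q_def P_def by (intro prod_pos) (auto simp: prime_gt_0_nat)
  have "n dvd Q" if n: "n > 0" "weight n \<le> K" for n
  proof -
    have le: "prime_index p * multiplicity p n \<le> K" if "p \<in> prime_factors n" for p
      using member_le_sum[of p "prime_factors n" "\<lambda>p. prime_index p * multiplicity p n"] that n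
      unfolding weight_def by simp
    have index_le: "prime_index p \<le> K" and mult_le: "multiplicity p n \<le> K"
      if "p \<in> prime_factors n" for p
    proof -
      have "1 \<le> multiplicity p n" "1 \<le> prime_index p"
        using that n prime_index_pos by (auto simp: prime_factors_multiplicity)
      then have "prime_index p \<le> prime_index p * multiplicity p n"
        and "multiplicity p n \<le> prime_index p * multiplicity p n"
        by simp_all
      then show "prime_index p \<le> K" "multiplicity p n \<le> K"
        using le[OF that] by linarith+
    qed
    have "n = (\<Prod>p\<in>prime_factors n. p ^ multiplicity p n)"
      using n prime_factorization_nat by blast
    also have "\<dots> dvd (\<Prod>p\<in>prime_factors n. p ^ K)"
      by (intro prod_dvd_prod le_imp_power_dvd mult_le)
    also have "\<dots> dvd Q"
      unfolding Q_def using index_le by (intro prod_dvd_prod_subset[OF finP]) (auto simp: P_def)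
    finally show ?thesis .
  qed
  then have "{n. weight n \<le> K} \<subseteq> insert 0 {d. d dvd Q}"
    by auto
  moreover have "finite (insert 0 {d. d dvd Q})"
    using \<open>Q > 0\<close> by simp
  ultimately show ?thesis
    by (rule finite_subset)
qed

lemma has_sum_diff:
  fixes f g :: "'a \<Rightarrow> 'b::topological_ab_group_add"
  assumes "(f has_sum a) A" "(g has_sum b) A"
  shows "((\<lambda>x. f x - g x) has_sum (a - b)) A"
  using has_sum_add[OF assms(1), of "\<lambda>x. - g x" "- b"] assms(2) by (simp add: has_sum_uminus)

lemma has_sum_finite_sum:
  fixes f :: "'i \<Rightarrow> 'a \<Rightarrow> 'b::topological_comm_monoid_add"
  assumes "finite I" "\<And>i. i \<in> I \<Longrightarrow> (f i has_sum s i) A"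
  shows "((\<lambda>x. \<Sum>i\<in>I. f i x) has_sum (\<Sum>i\<in>I. s i)) A"
  using assms by (induction I rule: finite_induct) (auto intro: has_sum_add)

definition square_summable :: "(nat \<Rightarrow> complex) \<Rightarrow> bool" where
  "square_summable a \<longleftrightarrow> (\<lambda>n. (cmod (a n))\<^sup>2) summable_on UNIV"

definition sqnorm :: "(nat \<Rightarrow> complex) \<Rightarrow> real" where
  "sqnorm a = infsum (\<lambda>n. (cmod (a n))\<^sup>2) UNIV"

lemma l2_iff_square_summable: "a \<in> l2 \<longleftrightarrow> a 0 = 0 \<and> square_summable a"
  by (simp add: l2_def square_summable_def)

lemma l2norm_eq_sqrt_sqnorm: "l2norm a = sqrt (sqnorm a)"
  by (simp add: l2norm_def sqnorm_def)

lemma sqnorm_nonneg: "sqnorm a \<ge> 0"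
  unfolding sqnorm_def by (rule infsum_nonneg) simp

lemma sqnorm_le_if_partial_sums_le:
  assumes "\<And>F. finite F \<Longrightarrow> (\<Sum>n\<in>F. (cmod (a n))\<^sup>2) \<le> B"
  shows "square_summable a" "sqnorm a \<le> B"
proof -
  show summable: "square_summable a"
    unfolding square_summable_def
    by (rule nonneg_bdd_above_summable_on) (use assms in \<open>auto intro!: bdd_aboveI2\<close>)
  show "sqnorm a \<le> B"
    unfolding sqnorm_def
    by (rule infsum_le_finite_sums) (use summable assms in \<open>auto simp: square_summable_def\<close>)
qed

lemma sum_le_sqnorm:
  assumes "square_summable a" "finite F"
  shows "(\<Sum>n\<in>F. (cmod (a n))\<^sup>2) \<le> sqnorm a"
  unfolding sqnorm_def
  by (rule finite_sum_le_infsum) (use assms in \<open>auto simp: square_summable_def\<close>)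

lemma sqnorm_finite_support:
  assumes "finite S" "\<And>n. n \<notin> S \<Longrightarrow> a n = 0"
  shows "square_summable a" "sqnorm a = (\<Sum>n\<in>S. (cmod (a n))\<^sup>2)"
proof -
  have "((\<lambda>n. (cmod (a n))\<^sup>2) has_sum (\<Sum>n\<in>S. (cmod (a n))\<^sup>2)) UNIV"
    by (rule has_sum_finite_neutralI) (use assms in auto)
  then show "square_summable a" "sqnorm a = (\<Sum>n\<in>S. (cmod (a n))\<^sup>2)"
    by (auto simp: square_summable_def sqnorm_def has_sum_iff)
qed

lemma sqnorm_le_lincomb:
  assumes "square_summable a" "square_summable b" "c \<ge> 0" "d \<ge> 0"
    and "\<And>m. (cmod (x m))\<^sup>2 \<le> c * (cmod (a m))\<^sup>2 + d * (cmod (b m))\<^sup>2"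
  shows "square_summable x" "sqnorm x \<le> c * sqnorm a + d * sqnorm b"
proof -
  have summable: "(\<lambda>m. c * (cmod (a m))\<^sup>2 + d * (cmod (b m))\<^sup>2) summable_on UNIV"
    using assms unfolding square_summable_def by (intro summable_on_add summable_on_cmult_right)
  show sx: "square_summable x"
    unfolding square_summable_def
    by (rule summable_on_comparison_test[OF summable]) (use assms in auto)
  have "sqnorm x \<le> infsum (\<lambda>m. c * (cmod (a m))\<^sup>2 + d * (cmod (b m))\<^sup>2) UNIV"
    unfolding sqnorm_def
    by (rule infsum_mono) (use sx summable assms in \<open>auto simp: square_summable_def\<close>)
  also have "\<dots> = c * sqnorm a + d * sqnorm b"
    using assms unfolding sqnorm_def square_summable_def
    by (subst infsum_add) (auto intro: summable_on_cmult_right simp: infsum_cmult_right')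
  finally show "sqnorm x \<le> c * sqnorm a + d * sqnorm b" .
qed

lemma norm_diff_square_le: "(cmod (x - y))\<^sup>2 \<le> 2 * (cmod x)\<^sup>2 + 2 * (cmod y)\<^sup>2"
proof -
  have "(cmod (x - y))\<^sup>2 \<le> (cmod x + cmod y)\<^sup>2"
    by (rule power_mono[OF norm_triangle_ineq4]) simp
  also have "\<dots> \<le> 2 * (cmod x)\<^sup>2 + 2 * (cmod y)\<^sup>2"
    using zero_le_power2[of "cmod x - cmod y"] unfolding power2_sum power2_diff by linarith
  finally show ?thesis .
qed

lemma sqnorm_diff_le:
  assumes "square_summable a" "square_summable b"
  shows "square_summable (\<lambda>n. a n - b n)" "sqnorm (\<lambda>n. a n - b n) \<le> 2 * sqnorm a + 2 * sqnorm b"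
  using sqnorm_le_lincomb[OF assms, of 2 2 "\<lambda>n. a n - b n"] by (simp_all add: norm_diff_square_le)

lemma sqnorm_minus_commute: "sqnorm (\<lambda>n. a n - b n) = sqnorm (\<lambda>n. b n - a n)"
  by (simp add: sqnorm_def norm_minus_commute)

lemma sqnorm_cnj: "sqnorm (\<lambda>n. cnj (a n)) = sqnorm a"
  by (simp add: sqnorm_def)

lemma le_square_if_le_mult_sqrt:
  fixes S K :: real
  assumes "S \<ge> 0" "K \<ge> 0" "S \<le> K * sqrt S"
  shows "S \<le> K\<^sup>2"
proof (cases "S = 0")
  case False
  then have "sqrt S * sqrt S \<le> K * sqrt S" "sqrt S > 0"
    using assms by simp_all
  then have "sqrt S \<le> K"
    by (rule mult_right_le_imp_le)
  then show ?thesis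
    using assms real_sqrt_le_iff by fastforce
qed (use assms in simp)

section \<open>The diagonal operator \<open>D\<^sub>r\<close>\<close>

lemma norm_Dr: "0 \<le> r \<Longrightarrow> cmod (Dr r a n) = r ^ weight n * cmod (a n)"
  by (simp add: Dr_def norm_mult norm_power)

lemma Dr_diff: "Dr r a m - Dr r b m = complex_of_real (r ^ weight m) * (a m - b m)"
  by (simp add: Dr_def algebra_simps)

lemma Dr_contraction:
  assumes "0 \<le> r" "r \<le> 1" "square_summable a"
  shows "square_summable (Dr r a)" "sqnorm (Dr r a) \<le> sqnorm a"
proof -
  have "(cmod (Dr r a m))\<^sup>2 \<le> 1 * (cmod (a m))\<^sup>2 + 0 * (cmod (a m))\<^sup>2" for m
    using assms by (simp add: norm_Dr power_mult_distrib power_le_one mult_left_le_one_le)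
  from sqnorm_le_lincomb[OF assms(3) assms(3) _ _ this]
  show "square_summable (Dr r a)" "sqnorm (Dr r a) \<le> sqnorm a"
    by simp_all
qed

lemma Dr_l2: "0 \<le> r \<Longrightarrow> r \<le> 1 \<Longrightarrow> a \<in> l2 \<Longrightarrow> Dr r a \<in> l2"
  using Dr_contraction by (auto simp: l2_iff_square_summable Dr_def)

text \<open>By the Weierstrass M-test with majorant \<open>|b m|\<^sup>2\<close> the sum is continuous in \<open>r \<in> [0,1]\<close>,
  and it vanishes at \<open>r = 1\<close>.\<close>

lemma Dr_tendsto_identity:
  assumes "square_summable b"
  shows "((\<lambda>r. sqnorm (\<lambda>m. Dr r b m - b m)) \<longlongrightarrow> 0) (at_left 1)"
proof -
  define f where "f = (\<lambda>m (r::real). (cmod (Dr r b m - b m))\<^sup>2)"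
  define G where "G = (\<lambda>r. infsum (\<lambda>m. f m r) UNIV)"
  have bound: "norm (f m r) \<le> (cmod (b m))\<^sup>2" if "r \<in> {0..1}" for m r
  proof -
    have "Dr r b m - b m = complex_of_real (r ^ weight m - 1) * b m"
      by (simp add: Dr_def algebra_simps)
    then have "cmod (Dr r b m - b m) = \<bar>r ^ weight m - 1\<bar> * cmod (b m)"
      by (simp only: norm_mult norm_of_real)
    also have "\<dots> \<le> 1 * cmod (b m)"
      by (intro mult_right_mono) (use that in \<open>auto simp: power_le_one\<close>)
    finally show ?thesis
      by (simp add: f_def power_mono)
  qed
  have "uniform_limit {0..1} (\<lambda>X r. \<Sum>m\<in>X. f m r) G (finite_subsets_at_top UNIV)"
    unfolding G_def
    by (rule Weierstrass_m_test_general[OF bound])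
      (use assms in \<open>auto simp: square_summable_def\<close>)
  then have "continuous_on {0..1} G"
    by (rule uniform_limit_theorem[rotated])
      (auto simp: f_def Dr_def intro!: always_eventually continuous_on_sum continuous_intros)
  then have "(G \<longlongrightarrow> G 1) (at 1 within {0..1})"
    by (simp add: continuous_on_def)
  then have "(G \<longlongrightarrow> G 1) (at_left 1)"
    by (simp add: at_within_Icc_at_left)
  moreover have "G 1 = 0"
    by (simp add: G_def f_def Dr_def)
  ultimately show ?thesis
    by (simp add: G_def f_def sqnorm_def)
qed

lemma finite_Dr_weight_ge:
  fixes r \<delta> :: real
  assumes "0 < r" "r < 1" "\<delta> > 0"
  shows "finite {m. \<delta> \<le> r ^ weight m}"
proof -
  have "(\<lambda>n. r ^ n) \<longlonglongrightarrow> 0"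
    using assms by (intro LIMSEQ_power_zero) simp
  then have "eventually (\<lambda>n. r ^ n < \<delta>) sequentially"
    using assms(3) by (rule order_tendstoD)
  then obtain K where K: "r ^ K < \<delta>"
    by (auto simp: eventually_sequentially)
  have "{m. \<delta> \<le> r ^ weight m} \<subseteq> {m. weight m \<le> K}"
  proof (clarsimp, rule ccontr)
    fix m assume "\<delta> \<le> r ^ weight m" "\<not> weight m \<le> K"
    then have "r ^ weight m \<le> r ^ K"
      using assms by (intro power_decreasing) auto
    then show False
      using K \<open>\<delta> \<le> r ^ weight m\<close> by linarith
  qed
  then show ?thesis
    using finite_weight_le by (rule finite_subset)
qed

section \<open>Compactness of small multipliers\<close>

text \<open>A bounded sequence in \<open>\<ell>\<^sup>2\<close> lies in a product of discs, which is compact by Tychonoff.\<close>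

lemma pointwise_convergent_subseq:
  fixes u :: "nat \<Rightarrow> nat \<Rightarrow> complex"
  assumes "\<And>k. square_summable (u k)" "\<And>k. sqnorm (u k) \<le> B"
  obtains s v where "strict_mono s" "\<And>m. (\<lambda>k. u (s k) m) \<longlonglongrightarrow> v m"
    "square_summable v" "sqnorm v \<le> B"
proof -
  have bounded: "cmod (u k m) \<le> sqrt B" for k m
  proof -
    have "(cmod (u k m))\<^sup>2 \<le> B"
      using sum_le_sqnorm[OF assms(1), of "{m}" k] assms(2)[of k] by simp
    then show ?thesis
      by (rule real_le_rsqrt)
  qed
  define K where "K = PiE (UNIV :: nat set) (\<lambda>_. cball (0::complex) (sqrt B))"
  have "compactin (product_topology (\<lambda>_. euclidean) UNIV) K"
    unfolding K_def by (subst compactin_PiE) auto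
  then have "compact K"
    by (simp add: euclidean_product_topology)
  then have "seq_compact K"
    by (rule compact_imp_seq_compact)
  moreover have "\<forall>k. u k \<in> K"
    using bounded unfolding K_def by auto
  ultimately obtain v s where s: "strict_mono (s :: nat \<Rightarrow> nat)" and lim: "(u \<circ> s) \<longlonglongrightarrow> v"
    by (blast elim: seq_compactE)
  have pointwise: "(\<lambda>k. u (s k) m) \<longlonglongrightarrow> v m" for m
    using continuous_on_tendsto_compose[OF continuous_on_product_coordinates[of m] lim]
    by (simp add: o_def)
  have partial_sums: "(\<Sum>m\<in>F. (cmod (v m))\<^sup>2) \<le> B" if "finite F" for F
  proof (rule LIMSEQ_le_const2)
    show "(\<lambda>k. \<Sum>m\<in>F. (cmod (u (s k) m))\<^sup>2) \<longlonglongrightarrow> (\<Sum>m\<in>F. (cmod (v m))\<^sup>2)"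
      by (intro tendsto_intros pointwise)
    show "\<exists>N. \<forall>k\<ge>N. (\<Sum>m\<in>F. (cmod (u (s k) m))\<^sup>2) \<le> B"
      using sum_le_sqnorm[OF assms(1) that] assms(2) order_trans by blast
  qed
  show ?thesis
    by (rule that[OF s pointwise sqnorm_le_if_partial_sums_le[OF partial_sums]])
qed

lemma sqnorm_multiplier_le:
  fixes w :: "nat \<Rightarrow> complex"
  assumes w_le: "\<And>m. cmod (w m) \<le> 1" and "\<delta> \<ge> 0" and fin: "finite {m. \<delta> \<le> cmod (w m)}"
    and d: "square_summable d"
  shows "sqnorm (\<lambda>m. w m * d m) \<le> (\<Sum>m | \<delta> \<le> cmod (w m). (cmod (d m))\<^sup>2) + \<delta> * sqnorm d"
proof -
  define F where "F = {m. \<delta> \<le> cmod (w m)}"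
  define e where "e = (\<lambda>m. if m \<in> F then d m else 0)"
  have e: "square_summable e" "sqnorm e = (\<Sum>m\<in>F. (cmod (d m))\<^sup>2)"
    using sqnorm_finite_support[OF fin, of e] by (simp_all add: e_def F_def)
  have "(cmod (w m * d m))\<^sup>2 \<le> 1 * (cmod (e m))\<^sup>2 + \<delta> * (cmod (d m))\<^sup>2" for m
  proof (cases "m \<in> F")
    case True
    then show ?thesis
      using w_le[of m] \<open>\<delta> \<ge> 0\<close>
      by (simp add: e_def norm_mult power_mult_distrib power_le_one mult_left_le_one_le
          add_increasing2)
  next
    case False
    have "(cmod (w m))\<^sup>2 \<le> cmod (w m)"
      using w_le[of m] by (simp add: power2_eq_square mult_left_le_one_le)
    then have "(cmod (w m))\<^sup>2 \<le> \<delta>"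
      using False by (simp add: F_def)
    then show ?thesis
      using False by (simp add: e_def norm_mult power_mult_distrib mult_right_mono)
  qed
  then have "sqnorm (\<lambda>m. w m * d m) \<le> 1 * sqnorm e + \<delta> * sqnorm d"
    using \<open>\<delta> \<ge> 0\<close> by (intro sqnorm_le_lincomb(2)[OF e(1) d]) auto
  then show ?thesis
    using e(2) by (simp add: F_def)
qed

text \<open>On the finite set where the multiplier is at least \<open>\<delta>\<close> pointwise convergence suffices,
  and outside it the multiplier contributes at most \<open>\<delta>\<close> times the bound.\<close>

lemma sqnorm_multiplier_tendsto_zero:
  fixes w :: "nat \<Rightarrow> complex" and d :: "nat \<Rightarrow> nat \<Rightarrow> complex"
  assumes w_le: "\<And>m. cmod (w m) \<le> 1"
    and w_small: "\<And>\<delta>. \<delta> > 0 \<Longrightarrow> finite {m. \<delta> \<le> cmod (w m)}"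
    and d: "\<And>k. square_summable (d k)" "\<And>k. sqnorm (d k) \<le> B"
    and pointwise: "\<And>m. (\<lambda>k. d k m) \<longlonglongrightarrow> 0"
  shows "(\<lambda>k. sqnorm (\<lambda>m. w m * d k m)) \<longlonglongrightarrow> 0"
proof (rule tendstoI)
  fix \<epsilon> :: real assume "\<epsilon> > 0"
  have "B \<ge> 0"
    using d(2)[of 0] sqnorm_nonneg[of "d 0"] by linarith
  define \<delta> where "\<delta> = \<epsilon> / (2 * B + 2)"
  have "\<delta> > 0" "\<delta> * B < \<epsilon> / 2"
    using \<open>\<epsilon> > 0\<close> \<open>B \<ge> 0\<close> by (auto simp: \<delta>_def field_simps)
  define F where "F = {m. \<delta> \<le> cmod (w m)}"
  have le: "sqnorm (\<lambda>m. w m * d k m) \<le> (\<Sum>m\<in>F. (cmod (d k m))\<^sup>2) + \<delta> * B" for k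
  proof -
    have "\<delta> * sqnorm (d k) \<le> \<delta> * B"
      using \<open>\<delta> > 0\<close> d(2) by simp
    then show ?thesis
      unfolding F_def using sqnorm_multiplier_le[OF w_le _ w_small d(1), of \<delta> k] \<open>\<delta> > 0\<close>
      by linarith
  qed
  have "(\<lambda>k. \<Sum>m\<in>F. (cmod (d k m))\<^sup>2) \<longlonglongrightarrow> (\<Sum>m\<in>F. (cmod 0)\<^sup>2)"
    by (intro tendsto_intros pointwise)
  then have "eventually (\<lambda>k. (\<Sum>m\<in>F. (cmod (d k m))\<^sup>2) < \<epsilon> / 2) sequentially"
    using \<open>\<epsilon> > 0\<close> by (intro order_tendstoD) auto
  then show "eventually (\<lambda>k. dist (sqnorm (\<lambda>m. w m * d k m)) 0 < \<epsilon>) sequentially"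
  proof eventually_elim
    case (elim k)
    then show ?case
      using le[of k] \<open>\<delta> * B < \<epsilon> / 2\<close> sqnorm_nonneg[of "\<lambda>m. w m * d k m"]
      by (simp add: dist_real_def)
  qed
qed

section \<open>The multiplicative Hankel operator\<close>

definition form_bound :: "(nat \<Rightarrow> complex) \<Rightarrow> real \<Rightarrow> bool" where
  "form_bound \<alpha> C \<longleftrightarrow> C \<ge> 0 \<and>
     (\<forall>a b. fin_supp a \<longrightarrow> fin_supp b \<longrightarrow> cmod (Mform \<alpha> a b) \<le> C * l2norm a * l2norm b)"

lemma bounded_M_imp_form_bound:
  assumes "bounded_M \<alpha>"
  obtains C where "form_bound \<alpha> C"
proof -
  obtain C where C: "\<And>a b. fin_supp a \<Longrightarrow> fin_supp b \<Longrightarrow> cmod (Mform \<alpha> a b) \<le> C * l2norm a * l2norm b"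
    using assms unfolding bounded_M_def by blast
  have "cmod (Mform \<alpha> a b) \<le> max C 0 * l2norm a * l2norm b" if "fin_supp a" "fin_supp b" for a b
  proof -
    have "C * l2norm a * l2norm b \<le> max C 0 * l2norm a * l2norm b"
      by (intro mult_right_mono) (auto simp: l2norm_eq_sqrt_sqnorm sqnorm_nonneg)
    then show ?thesis
      using C[OF that] by linarith
  qed
  then have "form_bound \<alpha> (max C 0)"
    unfolding form_bound_def by simp
  then show ?thesis
    by (rule that)
qed

lemma Mform_eq_sum:
  assumes "finite A" "finite B" "\<And>n. n \<notin> A \<Longrightarrow> a n = 0" "\<And>m. m \<notin> B \<Longrightarrow> b m = 0"
  shows "Mform \<alpha> a b = (\<Sum>n\<in>A. \<Sum>m\<in>B. a n * cnj (b m) * \<alpha> (n * m))"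
proof -
  have "(\<Sum>m\<in>{m. b m \<noteq> 0}. a n * cnj (b m) * \<alpha> (n * m)) = (\<Sum>m\<in>B. a n * cnj (b m) * \<alpha> (n * m))" for n
    by (rule sum.mono_neutral_left) (use assms in auto)
  then have "Mform \<alpha> a b = (\<Sum>n\<in>{n. a n \<noteq> 0}. \<Sum>m\<in>B. a n * cnj (b m) * \<alpha> (n * m))"
    unfolding Mform_def by simp
  also have "\<dots> = (\<Sum>n\<in>A. \<Sum>m\<in>B. a n * cnj (b m) * \<alpha> (n * m))"
    by (rule sum.mono_neutral_left) (use assms in auto)
  finally show ?thesis .
qed

lemma form_bound_finite_sums:
  assumes "form_bound \<alpha> C" "finite A" "finite B" "0 \<notin> A" "0 \<notin> B"
  shows "cmod (\<Sum>n\<in>A. \<Sum>m\<in>B. a n * cnj (b m) * \<alpha> (n * m))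
    \<le> C * sqrt (\<Sum>n\<in>A. (cmod (a n))\<^sup>2) * sqrt (\<Sum>m\<in>B. (cmod (b m))\<^sup>2)"
proof -
  define a' where "a' = (\<lambda>n. if n \<in> A then a n else 0)"
  define b' where "b' = (\<lambda>m. if m \<in> B then b m else 0)"
  have "fin_supp a'" "fin_supp b'"
    using assms unfolding fin_supp_def a'_def b'_def by (auto intro: finite_subset)
  then have "cmod (Mform \<alpha> a' b') \<le> C * l2norm a' * l2norm b'"
    using assms(1) unfolding form_bound_def by blast
  moreover have "Mform \<alpha> a' b' = (\<Sum>n\<in>A. \<Sum>m\<in>B. a n * cnj (b m) * \<alpha> (n * m))"
    by (subst Mform_eq_sum[OF assms(2,3)]) (auto simp: a'_def b'_def)
  moreover have "l2norm a' = sqrt (\<Sum>n\<in>A. (cmod (a n))\<^sup>2)" "l2norm b' = sqrt (\<Sum>m\<in>B. (cmod (b m))\<^sup>2)"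
    using sqnorm_finite_support(2)[OF assms(2), of a'] sqnorm_finite_support(2)[OF assms(3), of b']
    by (simp_all add: l2norm_eq_sqrt_sqnorm a'_def b'_def)
  ultimately show ?thesis
    by simp
qed

lemma row_square_summable:
  assumes bound: "form_bound \<alpha> C" and "m > 0"
  shows "(\<lambda>n. (cmod (\<alpha> (n * m)))\<^sup>2) summable_on {1..}"
proof (rule nonneg_bdd_above_summable_on)
  have "(\<Sum>n\<in>F. (cmod (\<alpha> (n * m)))\<^sup>2) \<le> C\<^sup>2" if "finite F" "F \<subseteq> {1..}" for F
  proof -
    define S where "S = (\<Sum>n\<in>F. (cmod (\<alpha> (n * m)))\<^sup>2)"
    have "complex_of_real S = (\<Sum>n\<in>F. \<Sum>k\<in>{m}. cnj (\<alpha> (n * m)) * cnj 1 * \<alpha> (n * k))"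
      unfolding S_def of_real_sum complex_norm_square by (simp add: mult.commute)
    moreover have "0 \<notin> F"
      using that by auto
    ultimately have "cmod (complex_of_real S) \<le> C * sqrt S"
      using form_bound_finite_sums[OF bound that(1), of "{m}" "\<lambda>n. cnj (\<alpha> (n * m))" "\<lambda>_. 1"]
        \<open>m > 0\<close> by (simp add: S_def)
    moreover have "S \<ge> 0"
      unfolding S_def by (simp add: sum_nonneg)
    ultimately have "S \<le> C * sqrt S"
      by simp
    then show ?thesis
      using le_square_if_le_mult_sqrt[of S C] bound
      by (simp add: S_def sum_nonneg form_bound_def)
  qed
  then show "bdd_above (sum (\<lambda>n. (cmod (\<alpha> (n * m)))\<^sup>2) ` {F. F \<subseteq> {1..} \<and> finite F})"
    by (auto intro!: bdd_aboveI2)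
qed simp

lemma Mop_zero [simp]: "Mop \<alpha> a 0 = 0"
  by (simp add: Mop_def)

lemma has_sum_Mop:
  assumes "form_bound \<alpha> C" "m > 0" "square_summable a"
  shows "((\<lambda>n. \<alpha> (n * m) * a n) has_sum Mop \<alpha> a m) {1..}"
proof -
  have "(\<lambda>n. (cmod (\<alpha> (n * m)))\<^sup>2 + (cmod (a n))\<^sup>2) summable_on {1..}"
    using row_square_summable[OF assms(1,2)] assms(3) unfolding square_summable_def
    by (intro summable_on_add) (auto intro: summable_on_subset_banach)
  moreover have "norm (\<alpha> (n * m) * a n) \<le> (cmod (\<alpha> (n * m)))\<^sup>2 + (cmod (a n))\<^sup>2" for n
  proof -
    have "2 * (cmod (\<alpha> (n * m)) * cmod (a n)) \<le> (cmod (\<alpha> (n * m)))\<^sup>2 + (cmod (a n))\<^sup>2"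
      using zero_le_power2[of "cmod (\<alpha> (n * m)) - cmod (a n)"] unfolding power2_diff by linarith
    then show ?thesis
      unfolding norm_mult using mult_nonneg_nonneg[OF norm_ge_zero norm_ge_zero, of "\<alpha> (n * m)" "a n"]
      by linarith
  qed
  ultimately have "(\<lambda>n. norm (\<alpha> (n * m) * a n)) summable_on {1..}"
    by (rule summable_on_comparison_test) simp
  then have "(\<lambda>n. \<alpha> (n * m) * a n) summable_on {1..}"
    by (rule abs_summable_summable)
  then show ?thesis
    using \<open>m > 0\<close> by (simp add: Mop_def has_sum_infsum)
qed

text \<open>The pairing of \<open>M(\<alpha>) a\<close> with a finitely supported \<open>b\<close> is the limit of the form on
  finite truncations of \<open>a\<close>, so it inherits the bound.\<close>

lemma Mop_pairing_le:
  assumes bound: "form_bound \<alpha> C" and a: "square_summable a" and B: "finite B" "0 \<notin> B"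
  shows "cmod (\<Sum>m\<in>B. cnj (b m) * Mop \<alpha> a m)
    \<le> C * sqrt (sqnorm a) * sqrt (\<Sum>m\<in>B. (cmod (b m))\<^sup>2)"
proof (rule Lim_norm_ubound)
  define g where "g = (\<lambda>n. \<Sum>m\<in>B. cnj (b m) * (\<alpha> (n * m) * a n))"
  have "(g has_sum (\<Sum>m\<in>B. cnj (b m) * Mop \<alpha> a m)) {1..}"
    unfolding g_def using B
    by (intro has_sum_finite_sum has_sum_cmult_right has_sum_Mop[OF bound _ a]) (auto intro: gr0I)
  then show "(sum g \<longlongrightarrow> (\<Sum>m\<in>B. cnj (b m) * Mop \<alpha> a m)) (finite_subsets_at_top {1..})"
    by (simp add: has_sum_def)
  have "cmod (sum g A) \<le> C * sqrt (sqnorm a) * sqrt (\<Sum>m\<in>B. (cmod (b m))\<^sup>2)"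
    if A: "finite A" "A \<subseteq> {1..}" for A
  proof -
    have "sum g A = (\<Sum>n\<in>A. \<Sum>m\<in>B. a n * cnj (b m) * \<alpha> (n * m))"
      unfolding g_def by (simp add: ac_simps)
    also have "cmod \<dots> \<le> C * sqrt (\<Sum>n\<in>A. (cmod (a n))\<^sup>2) * sqrt (\<Sum>m\<in>B. (cmod (b m))\<^sup>2)"
      using A B by (intro form_bound_finite_sums[OF bound]) auto
    also have "\<dots> \<le> C * sqrt (sqnorm a) * sqrt (\<Sum>m\<in>B. (cmod (b m))\<^sup>2)"
      using bound sum_le_sqnorm[OF a A(1)]
      by (intro mult_right_mono mult_left_mono) (auto simp: form_bound_def sum_nonneg)
    finally show ?thesis .
  qed
  then show "\<forall>\<^sub>F A in finite_subsets_at_top {1..}.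
      cmod (sum g A) \<le> C * sqrt (sqnorm a) * sqrt (\<Sum>m\<in>B. (cmod (b m))\<^sup>2)"
    by (intro eventually_finite_subsets_at_top_weakI) auto
qed simp

lemma Mop_bound:
  assumes bound: "form_bound \<alpha> C" and a: "square_summable a"
  shows "square_summable (Mop \<alpha> a)" "sqnorm (Mop \<alpha> a) \<le> C\<^sup>2 * sqnorm a"
proof -
  have "(\<Sum>m\<in>F. (cmod (Mop \<alpha> a m))\<^sup>2) \<le> C\<^sup>2 * sqnorm a" if "finite F" for F
  proof -
    define S where "S = (\<Sum>m\<in>F - {0}. (cmod (Mop \<alpha> a m))\<^sup>2)"
    have S_eq: "S = (\<Sum>m\<in>F. (cmod (Mop \<alpha> a m))\<^sup>2)"
      unfolding S_def by (rule sum.mono_neutral_left) (use that in auto)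
    have "S \<ge> 0"
      unfolding S_def by (simp add: sum_nonneg)
    have "complex_of_real S = (\<Sum>m\<in>F - {0}. cnj (Mop \<alpha> a m) * Mop \<alpha> a m)"
      unfolding S_def of_real_sum complex_norm_square by (simp add: mult.commute)
    moreover have "cmod (\<Sum>m\<in>F - {0}. cnj (Mop \<alpha> a m) * Mop \<alpha> a m) \<le> C * sqrt (sqnorm a) * sqrt S"
      unfolding S_def by (rule Mop_pairing_le[OF bound a]) (use that in auto)
    ultimately have "S \<le> C * sqrt (sqnorm a) * sqrt S"
      using \<open>S \<ge> 0\<close> by (metis abs_of_nonneg norm_of_real)
    then have "S \<le> (C * sqrt (sqnorm a))\<^sup>2"
      using bound \<open>S \<ge> 0\<close> sqnorm_nonneg[of a]
      by (intro le_square_if_le_mult_sqrt) (auto simp: form_bound_def)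
    then show ?thesis
      using S_eq sqnorm_nonneg[of a] by (simp add: power_mult_distrib)
  qed
  then show "square_summable (Mop \<alpha> a)" "sqnorm (Mop \<alpha> a) \<le> C\<^sup>2 * sqnorm a"
    by (fact sqnorm_le_if_partial_sums_le)+
qed

lemma sqnorm_Mop_le_unit_ball:
  assumes "form_bound \<alpha> C" "square_summable a" "sqnorm a \<le> 1"
  shows "sqnorm (Mop \<alpha> a) \<le> C\<^sup>2"
  using Mop_bound(2)[OF assms(1,2)] mult_left_le[OF assms(3), of "C\<^sup>2"] by simp

lemma Mop_l2: "form_bound \<alpha> C \<Longrightarrow> a \<in> l2 \<Longrightarrow> Mop \<alpha> a \<in> l2"
  using Mop_bound(1) by (simp add: l2_iff_square_summable)

lemma Mop_diff:
  assumes "form_bound \<alpha> C" "square_summable a" "square_summable b"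
  shows "Mop \<alpha> (\<lambda>n. a n - b n) m = Mop \<alpha> a m - Mop \<alpha> b m"
proof (cases "m = 0")
  case False
  have "((\<lambda>n. \<alpha> (n * m) * a n - \<alpha> (n * m) * b n) has_sum (Mop \<alpha> a m - Mop \<alpha> b m)) {1..}"
    using False assms by (intro has_sum_diff has_sum_Mop) auto
  then show ?thesis
    using False by (simp add: Mop_def right_diff_distrib infsumI)
qed simp

lemma Mop_Dr: "Mop (Dr r \<alpha>) a = Dr r (Mop \<alpha> (Dr r a))"
proof
  fix m show "Mop (Dr r \<alpha>) a m = Dr r (Mop \<alpha> (Dr r a)) m"
  proof (cases "m = 0")
    case False
    have "infsum (\<lambda>n. Dr r \<alpha> (n * m) * a n) {1..}
        = infsum (\<lambda>n. complex_of_real (r ^ weight m) * (\<alpha> (n * m) * Dr r a n)) {1..}"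
    proof (rule infsum_cong)
      fix n :: nat assume "n \<in> {1..}"
      then have "weight (n * m) = weight n + weight m"
        using False by (intro weight_mult) auto
      then show "Dr r \<alpha> (n * m) * a n = complex_of_real (r ^ weight m) * (\<alpha> (n * m) * Dr r a n)"
        by (simp add: Dr_def power_add ac_simps)
    qed
    also have "\<dots> = complex_of_real (r ^ weight m) * infsum (\<lambda>n. \<alpha> (n * m) * Dr r a n) {1..}"
      by (rule infsum_cmult_right')
    finally show ?thesis
      using False by (simp add: Mop_def Dr_def)
  qed (simp add: Dr_def)
qed

lemma Madj_eq_cnj_Mop: "Madj \<alpha> a m = cnj (Mop \<alpha> (\<lambda>n. cnj (a n)) m)"
  by (simp add: Mop_def Madj_def flip: infsum_cnj)


lemma compact_M_Dr:
  assumes bound: "form_bound \<alpha> C" and r: "0 < r" "r < 1"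
  shows "compact_M (Dr r \<alpha>)"
  unfolding compact_M_def
proof (intro conjI ballI allI impI)
  fix a assume "a \<in> l2"
  then show "Mop (Dr r \<alpha>) a \<in> l2"
    using r by (simp add: Mop_Dr Dr_l2 Mop_l2[OF bound])
next
  fix x :: "nat \<Rightarrow> nat \<Rightarrow> complex"
  assume x: "\<forall>k. x k \<in> l2 \<and> l2norm (x k) \<le> 1"
  define u where "u = (\<lambda>k. Mop \<alpha> (Dr r (x k)))"
  have u: "square_summable (u k)" "sqnorm (u k) \<le> C\<^sup>2" for k
  proof -
    have "square_summable (x k)" "sqnorm (x k) \<le> 1"
      using x by (auto simp: l2_iff_square_summable l2norm_eq_sqrt_sqnorm)
    then have "square_summable (Dr r (x k))" "sqnorm (Dr r (x k)) \<le> 1"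
      using Dr_contraction[of r "x k"] r by auto
    then show "square_summable (u k)" "sqnorm (u k) \<le> C\<^sup>2"
      unfolding u_def by (auto intro: Mop_bound(1)[OF bound] sqnorm_Mop_le_unit_ball[OF bound])
  qed
  obtain s v where s: "strict_mono s" and pointwise: "\<And>m. (\<lambda>k. u (s k) m) \<longlonglongrightarrow> v m"
    and v: "square_summable v" "sqnorm v \<le> C\<^sup>2"
    using pointwise_convergent_subseq[of u "C\<^sup>2", OF u] by blast
  have "(\<lambda>k. sqnorm (\<lambda>m. complex_of_real (r ^ weight m) * (u (s k) m - v m))) \<longlonglongrightarrow> 0"
  proof (rule sqnorm_multiplier_tendsto_zero)
    show "square_summable (\<lambda>m. u (s k) m - v m)" "sqnorm (\<lambda>m. u (s k) m - v m) \<le> 4 * C\<^sup>2" for k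
      using sqnorm_diff_le[OF u(1) v(1), of "s k"] u(2)[of "s k"] v(2) by auto
    show "(\<lambda>k. u (s k) m - v m) \<longlonglongrightarrow> 0" for m
      using pointwise[of m] by (simp add: LIM_zero)
    show "cmod (complex_of_real (r ^ weight m)) \<le> 1" for m
      using r by (simp add: norm_power power_le_one)
    show "finite {m. \<delta> \<le> cmod (complex_of_real (r ^ weight m))}" if "\<delta> > 0" for \<delta>
      using finite_Dr_weight_ge[OF r that] r by (simp add: norm_power)
  qed
  then have "(\<lambda>k. sqrt (sqnorm (\<lambda>m. Dr r (u (s k)) m - Dr r v m))) \<longlonglongrightarrow> sqrt 0"
    unfolding Dr_diff by (rule tendsto_real_sqrt)
  then have "(\<lambda>k. l2norm (\<lambda>m. Mop (Dr r \<alpha>) (x (s k)) m - Dr r v m)) \<longlonglongrightarrow> 0"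
    by (simp add: l2norm_eq_sqrt_sqnorm Mop_Dr u_def)
  moreover have "v 0 = 0"
    using pointwise[of 0] LIMSEQ_unique[of "\<lambda>k. u (s k) 0" 0 "v 0"] by (simp add: u_def)
  then have "Dr r v \<in> l2"
    using Dr_l2[of r v] r v by (simp add: l2_iff_square_summable)
  ultimately show "\<exists>s y. strict_mono s \<and> y \<in> l2 \<and>
      (\<lambda>k. l2norm (\<lambda>m. Mop (Dr r \<alpha>) (x (s k)) m - y m)) \<longlonglongrightarrow> 0"
    using s by blast
qed

lemma l2norm_Mop_Dr_le:
  assumes bound: "form_bound \<alpha> C" and r: "0 \<le> r" "r \<le> 1" and a: "a \<in> l2"
  shows "l2norm (Mop (Dr r \<alpha>) a) \<le> l2norm (Mop \<alpha> (Dr r a))"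
proof -
  have "square_summable (Mop \<alpha> (Dr r a))"
    using Mop_l2[OF bound Dr_l2[OF r a]] by (simp add: l2_iff_square_summable)
  then show ?thesis
    using Dr_contraction(2)[OF r] by (simp add: Mop_Dr l2norm_eq_sqrt_sqnorm)
qed

lemma Mnorm_Dr_le:
  assumes bound: "form_bound \<alpha> C" and r: "0 \<le> r" "r \<le> 1"
  shows "Mnorm (Dr r \<alpha>) \<le> Mnorm \<alpha>"
proof -
  define S where "S = (\<lambda>\<beta>. {l2norm (Mop \<beta> a) | a. a \<in> l2 \<and> l2norm a \<le> 1})"
  have "bdd_above (S \<alpha>)"
  proof (rule bdd_aboveI)
    fix t assume "t \<in> S \<alpha>"
    then obtain a where a: "a \<in> l2" "l2norm a \<le> 1" and t: "t = l2norm (Mop \<alpha> a)"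
      unfolding S_def by blast
    have "sqnorm (Mop \<alpha> a) \<le> C\<^sup>2"
      using a by (intro sqnorm_Mop_le_unit_ball[OF bound])
        (auto simp: l2_iff_square_summable l2norm_eq_sqrt_sqnorm)
    then show "t \<le> C"
      using bound by (simp add: t l2norm_eq_sqrt_sqnorm form_bound_def real_sqrt_le_iff real_le_lsqrt)
  qed
  have "Sup (S (Dr r \<alpha>)) \<le> Sup (S \<alpha>)"
  proof (rule cSup_least)
    have "(\<lambda>_. 0) \<in> l2"
      by (simp add: l2_def)
    then show "S (Dr r \<alpha>) \<noteq> {}"
      unfolding S_def by (auto simp: l2norm_def)
  next
    fix t assume "t \<in> S (Dr r \<alpha>)"
    then obtain a where a: "a \<in> l2" "l2norm a \<le> 1" and t: "t = l2norm (Mop (Dr r \<alpha>) a)"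
      unfolding S_def by blast
    have "l2norm (Dr r a) \<le> 1"
      using Dr_contraction(2)[OF r, of a] a by (simp add: l2_iff_square_summable l2norm_eq_sqrt_sqnorm)
    then have "l2norm (Mop \<alpha> (Dr r a)) \<in> S \<alpha>"
      unfolding S_def using Dr_l2[OF r a(1)] by blast
    then have "l2norm (Mop \<alpha> (Dr r a)) \<le> Sup (S \<alpha>)"
      using \<open>bdd_above (S \<alpha>)\<close> by (rule cSup_upper)
    then show "t \<le> Sup (S \<alpha>)"
      using l2norm_Mop_Dr_le[OF bound r a(1)] t by linarith
  qed
  then show ?thesis
    unfolding Mnorm_def S_def by simp
qed

text \<open>Write \<open>M(D\<^sub>r \<alpha>) a - M(\<alpha>) a = D\<^sub>r M(\<alpha>) (D\<^sub>r a - a) + (D\<^sub>r - 1) M(\<alpha>) a\<close>.\<close>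

lemma sqnorm_Mop_Dr_diff_le:
  assumes bound: "form_bound \<alpha> C" and r: "0 \<le> r" "r \<le> 1" and a: "square_summable a"
  shows "sqnorm (\<lambda>m. Mop (Dr r \<alpha>) a m - Mop \<alpha> a m)
    \<le> 2 * C\<^sup>2 * sqnorm (\<lambda>n. Dr r a n - a n) + 2 * sqnorm (\<lambda>m. Dr r (Mop \<alpha> a) m - Mop \<alpha> a m)"
proof -
  define c where "c = (\<lambda>n. Dr r a n - a n)"
  define b where "b = Mop \<alpha> a"
  have Da: "square_summable (Dr r a)"
    using Dr_contraction(1)[OF r a] .
  have c: "square_summable c"
    unfolding c_def using sqnorm_diff_le(1)[OF Da a] .
  have b: "square_summable b"
    unfolding b_def using Mop_bound(1)[OF bound a] .
  have Mc: "square_summable (Mop \<alpha> c)"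
    using Mop_bound(1)[OF bound c] .
  have split: "(\<lambda>m. Mop (Dr r \<alpha>) a m - b m) = (\<lambda>m. Dr r (Mop \<alpha> c) m - (b m - Dr r b m))"
  proof
    fix m
    have "Mop (Dr r \<alpha>) a m = complex_of_real (r ^ weight m) * Mop \<alpha> (Dr r a) m"
      unfolding Mop_Dr by (rule Dr_def)
    also have "Mop \<alpha> (Dr r a) m = Mop \<alpha> c m + b m"
      unfolding c_def b_def Mop_diff[OF bound Da a] by simp
    finally show "Mop (Dr r \<alpha>) a m - b m = Dr r (Mop \<alpha> c) m - (b m - Dr r b m)"
      by (simp add: Dr_def[of r "Mop \<alpha> c"] Dr_def[of r b] algebra_simps)
  qed
  have "sqnorm (\<lambda>m. Mop (Dr r \<alpha>) a m - b m)
      \<le> 2 * sqnorm (Dr r (Mop \<alpha> c)) + 2 * sqnorm (\<lambda>m. b m - Dr r b m)"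
    unfolding split
    by (rule sqnorm_diff_le(2)[OF Dr_contraction(1)[OF r Mc] sqnorm_diff_le(1)[OF b Dr_contraction(1)[OF r b]]])
  also have "\<dots> \<le> 2 * (C\<^sup>2 * sqnorm c) + 2 * sqnorm (\<lambda>m. Dr r b m - b m)"
    using Dr_contraction(2)[OF r Mc] Mop_bound(2)[OF bound c] by (simp add: sqnorm_minus_commute)
  finally show ?thesis
    by (simp add: c_def b_def)
qed

lemma Mop_Dr_strong_tendsto:
  assumes bound: "form_bound \<alpha> C" and a: "a \<in> l2"
  shows "((\<lambda>r. l2norm (\<lambda>m. Mop (Dr r \<alpha>) a m - Mop \<alpha> a m)) \<longlongrightarrow> 0) (at_left 1)"
proof -
  have a': "square_summable a" and b: "square_summable (Mop \<alpha> a)"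
    using a Mop_bound(1)[OF bound] by (auto simp: l2_iff_square_summable)
  define g where "g = (\<lambda>r. 2 * C\<^sup>2 * sqnorm (\<lambda>n. Dr r a n - a n)
    + 2 * sqnorm (\<lambda>m. Dr r (Mop \<alpha> a) m - Mop \<alpha> a m))"
  have "(g \<longlongrightarrow> 2 * C\<^sup>2 * 0 + 2 * 0) (at_left 1)"
    unfolding g_def by (intro tendsto_intros Dr_tendsto_identity a' b)
  then have g: "(g \<longlongrightarrow> 0) (at_left 1)"
    by simp
  have "eventually (\<lambda>r. 0 < r \<and> r < (1::real)) (at_left 1)"
    using eventually_at_left_real[of 0 "1::real"] by simp
  then have le_g: "eventually (\<lambda>r. sqnorm (\<lambda>m. Mop (Dr r \<alpha>) a m - Mop \<alpha> a m) \<le> g r) (at_left 1)"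
  proof eventually_elim
    case (elim r)
    then show ?case
      unfolding g_def using sqnorm_Mop_Dr_diff_le[OF bound _ _ a', of r] by simp
  qed
  have "((\<lambda>r. sqnorm (\<lambda>m. Mop (Dr r \<alpha>) a m - Mop \<alpha> a m)) \<longlongrightarrow> 0) (at_left 1)"
    by (rule tendsto_sandwich[OF always_eventually le_g tendsto_const g]) (simp add: sqnorm_nonneg)
  then show ?thesis
    using tendsto_real_sqrt[of _ 0] by (simp add: l2norm_eq_sqrt_sqnorm)
qed

lemma Madj_Dr_strong_tendsto:
  assumes bound: "form_bound \<alpha> C" and a: "a \<in> l2"
  shows "((\<lambda>r. l2norm (\<lambda>m. Madj (Dr r \<alpha>) a m - Madj \<alpha> a m)) \<longlongrightarrow> 0) (at_left 1)"
proof -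
  have "(\<lambda>n. cnj (a n)) \<in> l2"
    using a by (simp add: l2_def)
  moreover have "l2norm (\<lambda>m. Madj (Dr r \<alpha>) a m - Madj \<alpha> a m)
      = l2norm (\<lambda>m. Mop (Dr r \<alpha>) (\<lambda>n. cnj (a n)) m - Mop \<alpha> (\<lambda>n. cnj (a n)) m)" for r
    using sqnorm_cnj[of "\<lambda>m. Mop (Dr r \<alpha>) (\<lambda>n. cnj (a n)) m - Mop \<alpha> (\<lambda>n. cnj (a n)) m"]
    by (simp add: Madj_eq_cnj_Mop l2norm_eq_sqrt_sqnorm)
  ultimately show ?thesis
    using Mop_Dr_strong_tendsto[OF bound] by simp
qed

theorem lemma4:
  fixes \<alpha> :: "nat \<Rightarrow> complex"
  assumes "bounded_M \<alpha>"
  shows "(\<forall>r. 0 < r \<and> r < 1 \<longrightarrow>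
           compact_M (Dr r \<alpha>) \<and> Mnorm (Dr r \<alpha>) \<le> Mnorm \<alpha>)
       \<and> (\<forall>a\<in>l2. ((\<lambda>r. l2norm (\<lambda>m. Mop (Dr r \<alpha>) a m - Mop \<alpha> a m)) \<longlongrightarrow> 0) (at_left 1))
       \<and> (\<forall>a\<in>l2. ((\<lambda>r. l2norm (\<lambda>m. Madj (Dr r \<alpha>) a m - Madj \<alpha> a m)) \<longlongrightarrow> 0) (at_left 1))"
proof -
  obtain C where bound: "form_bound \<alpha> C"
    using bounded_M_imp_form_bound[OF assms] .
  show ?thesis
    using compact_M_Dr[OF bound] Mnorm_Dr_le[OF bound] Mop_Dr_strong_tendsto[OF bound]
      Madj_Dr_strong_tendsto[OF bound]
    by auto
qed

end
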